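(* Let $\alpha,\beta,\gamma\in\mathbb{R}$ with $\gamma\neq 0$, and let $G_2$ be the connected, simply connected Lie group whose Lie algebra $\mathfrak{g}_2$ has a basis $\{e_1,e_2,e_3\}$ with $[e_1,e_2]=\gamma e_2-\beta e_3$, $[e_1,e_3]=-\beta e_2-\gamma e_3$, $[e_2,e_3]=\alpha e_1$, equipped with the left-invariant Lorentzian metric $g$ for which $\{e_1,e_2,e_3\}$ is pseudo-orthonormal with $e_3$ timelike, and with the product structure $J$. Let $\lambda_0,c\in\mathbb{R}$. Then there exists a derivation $D$ of $\mathfrak{g}_2$ with $\widetilde{\mathrm{Ric}}^0=(s^0\lambda_0+c)\mathrm{Id}+D$ (i.e. $(G_2,g,J)$ is an algebraic Schouten soliton associated to the canonical connection $\nabla^0$) if and only if $\alpha=\beta=0$ and $c=-\gamma^2+2\gamma^2\lambda_0$.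
   Context: Pseudo-orthonormal means $g(e_1,e_1)=g(e_2,e_2)=1$, $g(e_3,e_3)=-1$, $g(e_i,e_j)=0$ for $i\neq j$; left-invariant tensors are identified with their values on $\mathfrak{g}$. $\nabla$ is the Levi-Civita connection of $g$. The product structure $J$ is the left-invariant endomorphism with $Je_1=e_1$, $Je_2=e_2$, $Je_3=-e_3$. The canonical connection is $\nabla^0_XY=\nabla_XY-\frac12(\nabla_XJ)JY$, and the Kobayashi–Nomizu connection is $\nabla^1_XY=\nabla^0_XY-\frac14[(\nabla_YJ)JX-(\nabla_{JY}J)X]$. For $k=0,1$: $R^k(X,Y)Z=\nabla^k_X\nabla^k_YZ-\nabla^k_Y\nabla^k_XZ-\nabla^k_{[X,Y]}Z$; $\rho^k(X,Y)=-g(R^k(X,e_1)Y,e_1)-g(R^k(X,e_2)Y,e_2)+g(R^k(X,e_3)Y,e_3)$; $\widetilde\rho^k(X,Y)=\frac12(\rho^k(X,Y)+\rho^k(Y,X))$; $\widetilde{\mathrm{Ric}}^k$ is defined by $\widetilde\rho^k(X,Y)=g(\widetilde{\mathrm{Ric}}^k(X),Y)$; and $s^k=\widetilde\rho^k(e_1,e_1)+\widetilde\rho^k(e_2,e_2)-\widetilde\rho^k(e_3,e_3)$. A derivation of $\mathfrak{g}$ is a linear map $D$ with $D[X,Y]=[DX,Y]+[X,DY]$. $(G,g,J)$ is an algebraic Schouten soliton associated to $\nabla^k$ (with real constants $\lambda_0,c$) if $\widetilde{\mathrm{Ric}}^k=(s^k\lambda_0+c)\mathrm{Id}+D$ for some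 derivation $D$. *)

theory Defs
  imports "HOL-Analysis.Analysis"
begin

text \<open>The Lie algebra g_2 is modelled as real^3, coordinates w.r.t. the basis e1 e2 e3.
  Parameters a b c stand for alpha beta gamma. All tensors are left-invariant,
  hence identified with their values on the Lie algebra.\<close>

definition e1 :: "real^3" where "e1 = vector [1, 0, 0]"
definition e2 :: "real^3" where "e2 = vector [0, 1, 0]"
definition e3 :: "real^3" where "e3 = vector [0, 0, 1]"

definition br :: "real \<Rightarrow> real \<Rightarrow> real \<Rightarrow> real^3 \<Rightarrow> real^3 \<Rightarrow> real^3" where
  "br a b c X Y =
     (X$1 * Y$2 - X$2 * Y$1) *\<^sub>R (c *\<^sub>R e2 - b *\<^sub>R e3)
   + (X$1 * Y$3 - X$3 * Y$1) *\<^sub>R ((- b) *\<^sub>R e2 - c *\<^sub>R e3)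
   + (X$2 * Y$3 - X$3 * Y$2) *\<^sub>R (a *\<^sub>R e1)"

definition gL :: "real^3 \<Rightarrow> real^3 \<Rightarrow> real" where
  "gL X Y = X$1 * Y$1 + X$2 * Y$2 - X$3 * Y$3"

text \<open>Metric dual: the vector V with gL V Z = f Z for a linear functional f.\<close>
definition raise :: "(real^3 \<Rightarrow> real) \<Rightarrow> real^3" where
  "raise f = f e1 *\<^sub>R e1 + f e2 *\<^sub>R e2 - f e3 *\<^sub>R e3"

text \<open>Levi-Civita connection on left-invariant fields (Koszul formula):
  2 g(nabla_X Y, Z) = g([X,Y],Z) - g([Y,Z],X) + g([Z,X],Y).\<close>
definition LC :: "real \<Rightarrow> real \<Rightarrow> real \<Rightarrow> real^3 \<Rightarrow> real^3 \<Rightarrow> real^3" where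
  "LC a b c X Y = raise (\<lambda>Z. (gL (br a b c X Y) Z - gL (br a b c Y Z) X + gL (br a b c Z X) Y) / 2)"

definition Jop :: "real^3 \<Rightarrow> real^3" where
  "Jop X = X$1 *\<^sub>R e1 + X$2 *\<^sub>R e2 - X$3 *\<^sub>R e3"

definition covJ :: "real \<Rightarrow> real \<Rightarrow> real \<Rightarrow> real^3 \<Rightarrow> real^3 \<Rightarrow> real^3" where
  "covJ a b c X Y = LC a b c X (Jop Y) - Jop (LC a b c X Y)"

definition can0 :: "real \<Rightarrow> real \<Rightarrow> real \<Rightarrow> real^3 \<Rightarrow> real^3 \<Rightarrow> real^3" where
  "can0 a b c X Y = LC a b c X Y - (1/2) *\<^sub>R covJ a b c X (Jop Y)"

definition R0 :: "real \<Rightarrow> real \<Rightarrow> real \<Rightarrow> real^3 \<Rightarrow> real^3 \<Rightarrow> real^3 \<Rightarrow> real^3" where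
  "R0 a b c X Y Z = can0 a b c X (can0 a b c Y Z) - can0 a b c Y (can0 a b c X Z)
                    - can0 a b c (br a b c X Y) Z"

definition rho0 :: "real \<Rightarrow> real \<Rightarrow> real \<Rightarrow> real^3 \<Rightarrow> real^3 \<Rightarrow> real" where
  "rho0 a b c X Y = - gL (R0 a b c X e1 Y) e1 - gL (R0 a b c X e2 Y) e2 + gL (R0 a b c X e3 Y) e3"

definition rhot0 :: "real \<Rightarrow> real \<Rightarrow> real \<Rightarrow> real^3 \<Rightarrow> real^3 \<Rightarrow> real" where
  "rhot0 a b c X Y = (rho0 a b c X Y + rho0 a b c Y X) / 2"

definition Ric0 :: "real \<Rightarrow> real \<Rightarrow> real \<Rightarrow> real^3 \<Rightarrow> real^3" where
  "Ric0 a b c X = raise (rhot0 a b c X)"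

definition s0 :: "real \<Rightarrow> real \<Rightarrow> real \<Rightarrow> real" where
  "s0 a b c = rhot0 a b c e1 e1 + rhot0 a b c e2 e2 - rhot0 a b c e3 e3"

definition is_derivation :: "real \<Rightarrow> real \<Rightarrow> real \<Rightarrow> (real^3 \<Rightarrow> real^3) \<Rightarrow> bool" where
  "is_derivation a b c D \<longleftrightarrow> linear D \<and>
     (\<forall>X Y. D (br a b c X Y) = br a b c (D X) Y + br a b c X (D Y))"

definition alg_schouten_soliton0 :: "real \<Rightarrow> real \<Rightarrow> real \<Rightarrow> real \<Rightarrow> real \<Rightarrow> bool" where
  "alg_schouten_soliton0 a b c lam0 cc \<longleftrightarrow>
     (\<exists>D. is_derivation a b c D \<and>
          (\<forall>X. Ric0 a b c X = (s0 a b c * lam0 + cc) *\<^sub>R X + D X))"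

end

(* The canonical connection of this Lie algebra can be computed in closed form, which makes
   Ric^0 an explicit matrix and s^0 = -2 gamma^2 - alpha beta. In a soliton the derivation is
   forced to be D = Ric^0 - k Id with k = s^0 lambda0 + c; the derivation identity on the three
   basis brackets gives polynomial equations in alpha, beta, gamma, k whose only solution with
   gamma <> 0 is alpha = beta = 0, k = - gamma^2. Conversely, for these values D is
   gamma^2 times the projection onto e3, which is a derivation. *)
theory Submission
  imports Defs
begin

lemma br_eq:
  "br a b c X Y = vector [a * (X$2 * Y$3 - X$3 * Y$2),
     c * (X$1 * Y$2 - X$2 * Y$1) - b * (X$1 * Y$3 - X$3 * Y$1),
     - b * (X$1 * Y$2 - X$2 * Y$1) - c * (X$1 * Y$3 - X$3 * Y$1)]"
  by (simp add: br_def vec_eq_iff forall_3 e1_def e2_def e3_def vector_3 algebra_simps)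

lemma can0_eq:
  "can0 a b c X Y = vector [c * X$2 * Y$2 - a/2 * X$3 * Y$2, - c * X$2 * Y$1 + a/2 * X$3 * Y$1, 0]"
  by (simp add: can0_def covJ_def LC_def raise_def gL_def Jop_def br_eq vec_eq_iff forall_3
      e1_def e2_def e3_def vector_3 field_simps)

lemma Ric0_eq:
  "Ric0 a b c X = vector [(- c\<^sup>2 - a*b/2) * X$1,
     (- c\<^sup>2 - a*b/2) * X$2 - (a*c/4 - b*c/2) * X$3,
     (a*c/4 - b*c/2) * X$2]"
  by (simp add: Ric0_def raise_def rhot0_def rho0_def R0_def can0_eq br_eq gL_def vec_eq_iff
      forall_3 e1_def e2_def e3_def vector_3 field_simps power2_eq_square)

lemma s0_eq: "s0 a b c = - 2 * c\<^sup>2 - a * b"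
  by (simp add: s0_def rhot0_def rho0_def R0_def can0_eq br_eq gL_def e1_def e2_def e3_def
      vector_3 power2_eq_square)

lemma alg_schouten_soliton0_iff_derivation:
  "alg_schouten_soliton0 a b c lam cc \<longleftrightarrow>
     is_derivation a b c (\<lambda>X. Ric0 a b c X - (s0 a b c * lam + cc) *\<^sub>R X)"
proof
  assume "alg_schouten_soliton0 a b c lam cc"
  then obtain D where "is_derivation a b c D"
    and "\<And>X. Ric0 a b c X = (s0 a b c * lam + cc) *\<^sub>R X + D X"
    unfolding alg_schouten_soliton0_def by blast
  moreover from this(2) have "(\<lambda>X. Ric0 a b c X - (s0 a b c * lam + cc) *\<^sub>R X) = D"
    by (simp add: fun_eq_iff)
  ultimately show "is_derivation a b c (\<lambda>X. Ric0 a b c X - (s0 a b c * lam + cc) *\<^sub>R X)"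
    by simp
next
  assume "is_derivation a b c (\<lambda>X. Ric0 a b c X - (s0 a b c * lam + cc) *\<^sub>R X)"
  then show "alg_schouten_soliton0 a b c lam cc"
    unfolding alg_schouten_soliton0_def by force
qed

lemma shifted_Ric0_derivation_equations:
  assumes "is_derivation a b c (\<lambda>X. Ric0 a b c X - k *\<^sub>R X)"
  shows "c * (k + a*b + c\<^sup>2 - b\<^sup>2) = 0" and "a * c\<^sup>2 = 2 * b * (k + c\<^sup>2)" and "a * k = 0"
proof -
  note der = assms[unfolded is_derivation_def, THEN conjunct2, rule_format]
  note simps = Ric0_eq br_eq vec_eq_iff forall_3 vector_3 e1_def e2_def e3_def
  show "c * (k + a*b + c\<^sup>2 - b\<^sup>2) = 0"
    using der[of e1 e2] by (simp add: simps field_simps power2_eq_square)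
  show "a * c\<^sup>2 = 2 * b * (k + c\<^sup>2)"
    using der[of e1 e3] by (simp add: simps field_simps power2_eq_square)
  show "a * k = 0"
    using der[of e2 e3] by (simp add: simps field_simps)
qed

lemma shifted_Ric0_derivation_equations_solve:
  fixes a b c k :: real
  assumes "c \<noteq> 0"
    and E1: "c * (k + a*b + c\<^sup>2 - b\<^sup>2) = 0"
    and E2: "a * c\<^sup>2 = 2 * b * (k + c\<^sup>2)"
    and E3: "a * k = 0"
  shows "a = 0 \<and> b = 0 \<and> k = - c\<^sup>2"
proof -
  from E1 \<open>c \<noteq> 0\<close> have "k + a*b + c\<^sup>2 - b\<^sup>2 = 0" by simp
  then have k: "k = b\<^sup>2 - c\<^sup>2 - a*b" by simp
  have a0: "a = 0"
  proof (rule ccontr)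
    assume "a \<noteq> 0"
    with E3 have "k = 0" by simp
    with E2 \<open>c \<noteq> 0\<close> have "a = 2 * b" by (simp add: power2_eq_square)
    with k \<open>k = 0\<close> have "b\<^sup>2 + c\<^sup>2 = 0" by (simp add: power2_eq_square algebra_simps)
    with \<open>c \<noteq> 0\<close> show False by (simp add: sum_power2_eq_zero_iff)
  qed
  with E2 k have "b ^ 3 = 0" by (simp add: power2_eq_square power3_eq_cube)
  then have "b = 0" by simp
  with a0 k show ?thesis by simp
qed

lemma is_derivation_shifted_Ric0_iff:
  assumes "c \<noteq> 0"
  shows "is_derivation a b c (\<lambda>X. Ric0 a b c X - k *\<^sub>R X) \<longleftrightarrow> a = 0 \<and> b = 0 \<and> k = - c\<^sup>2"
proof
  assume "is_derivation a b c (\<lambda>X. Ric0 a b c X - k *\<^sub>R X)"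
  then show "a = 0 \<and> b = 0 \<and> k = - c\<^sup>2"
    using shifted_Ric0_derivation_equations shifted_Ric0_derivation_equations_solve assms
    by blast
next
  assume "a = 0 \<and> b = 0 \<and> k = - c\<^sup>2"
  then have D: "(\<lambda>X. Ric0 a b c X - k *\<^sub>R X) = (\<lambda>X. vector [0, 0, c\<^sup>2 * X$3])"
    by (simp add: Ric0_eq fun_eq_iff vec_eq_iff forall_3 vector_3)
  have "linear (\<lambda>X::real^3. vector [0, 0, c\<^sup>2 * X$3] :: real^3)"
    by (rule linearI) (simp_all add: vec_eq_iff forall_3 vector_3 algebra_simps)
  with \<open>a = 0 \<and> b = 0 \<and> k = - c\<^sup>2\<close>
  show "is_derivation a b c (\<lambda>X. Ric0 a b c X - k *\<^sub>R X)"
    unfolding D is_derivation_def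
    by (simp add: br_eq vec_eq_iff forall_3 vector_3 algebra_simps)
qed

theorem theorem4p4:
  fixes \<alpha> \<beta> \<gamma> lambda0 c :: real
  assumes "\<gamma> \<noteq> 0"
  shows "alg_schouten_soliton0 \<alpha> \<beta> \<gamma> lambda0 c \<longleftrightarrow>
           \<alpha> = 0 \<and> \<beta> = 0 \<and> c = - \<gamma>\<^sup>2 + 2 * \<gamma>\<^sup>2 * lambda0"
proof -
  have "alg_schouten_soliton0 \<alpha> \<beta> \<gamma> lambda0 c \<longleftrightarrow>
          \<alpha> = 0 \<and> \<beta> = 0 \<and> s0 \<alpha> \<beta> \<gamma> * lambda0 + c = - \<gamma>\<^sup>2"
    using alg_schouten_soliton0_iff_derivation is_derivation_shifted_Ric0_iff[OF assms] by blast
  also have "\<dots> \<longleftrightarrow> \<alpha> = 0 \<and> \<beta> = 0 \<and> c = - \<gamma>\<^sup>2 + 2 * \<gamma>\<^sup>2 * lambda0"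
    by (auto simp: s0_eq algebra_simps)
  finally show ?thesis .
qed

end
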